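(* In the setting of the Structural Lemma for SpDeques, let $T_\infty$ be an integer at least the depth of $\mathcal T$ and define $w(v) = T_\infty - d(v)$, where $d(v)$ is the depth of $v$ in $\mathcal T$. Then at every moment of the process, with $v_0$ the assigned node (if any) and $v_1,\ldots,v_k$ the deque nodes from bottom to top, \[ w(v_0) \leq w(v_1) < w(v_2) < \cdots < w(v_{k-1}) < w(v_k). \]
   Context: Setting: $\mathcal T$ is a rooted tree; a state consists of an optional assigned node $v_0$ and a deque $v_1,\ldots,v_k$ (bottom to top) of non-root nodes of $\mathcal T$; the state changes only by (a) assigning any non-root node when there is no assigned node and the deque is empty; (b) executing the assigned node $v_0$: with no children, $v_0$ is discarded and the bottom deque node (if any) is removed and becomes assigned; with one child $x$, $x$ becomes assigned; with two children $x,y$, $x$ is pushed to the bottom of the deque and $y$ becomes assigned; (c) removing the top deque node. The weight $w(v)$ corresponds to the paper's node weight $T_\infty - d(v)$ with $T_\infty$ the critical-path length. *)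

theory Defs
  imports Main
begin

definition tree_edges :: "'a set \<Rightarrow> ('a \<Rightarrow> 'a list) \<Rightarrow> ('a \<times> 'a) set" where
  "tree_edges V c = {(u, x). u \<in> V \<and> x \<in> set (c u)}"

definition rooted_tree :: "'a set \<Rightarrow> 'a \<Rightarrow> ('a \<Rightarrow> 'a list) \<Rightarrow> bool" where
  "rooted_tree V r c \<longleftrightarrow>
     finite V \<and> r \<in> V \<and>
     (\<forall>v\<in>V. set (c v) \<subseteq> V \<and> distinct (c v)) \<and>
     (\<forall>u\<in>V. r \<notin> set (c u)) \<and>
     (\<forall>v\<in>V. v \<noteq> r \<longrightarrow> (\<exists>!u. u \<in> V \<and> v \<in> set (c u))) \<and>
     (\<forall>v\<in>V. (r, v) \<in> (tree_edges V c)\<^sup>*)"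

definition depth :: "'a set \<Rightarrow> 'a \<Rightarrow> ('a \<Rightarrow> 'a list) \<Rightarrow> 'a \<Rightarrow> nat" where
  "depth V r c v = (LEAST n. (r, v) \<in> (tree_edges V c) ^^ n)"

definition tree_depth :: "'a set \<Rightarrow> 'a \<Rightarrow> ('a \<Rightarrow> 'a list) \<Rightarrow> nat" where
  "tree_depth V r c = Max (depth V r c ` V)"

text \<open>States: (assigned node option, deque listed from bottom to top).\<close>
type_synonym 'a spstate = "'a option \<times> 'a list"

inductive spstep :: "'a set \<Rightarrow> 'a \<Rightarrow> ('a \<Rightarrow> 'a list) \<Rightarrow> 'a spstate \<Rightarrow> 'a spstate \<Rightarrow> bool"
  for V r c where
  assign: "v \<in> V \<Longrightarrow> v \<noteq> r \<Longrightarrow> spstep V r c (None, []) (Some v, [])"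
| exec0_empty: "c v0 = [] \<Longrightarrow> spstep V r c (Some v0, []) (None, [])"
| exec0_pop: "c v0 = [] \<Longrightarrow> spstep V r c (Some v0, x # q) (Some x, q)"
| exec1: "c v0 = [x] \<Longrightarrow> spstep V r c (Some v0, q) (Some x, q)"
| exec2: "c v0 = [x, y] \<Longrightarrow> spstep V r c (Some v0, q) (Some y, x # q)"
| remove_top: "q \<noteq> [] \<Longrightarrow> spstep V r c (a, q) (a, butlast q)"

definition sp_reachable :: "'a set \<Rightarrow> 'a \<Rightarrow> ('a \<Rightarrow> 'a list) \<Rightarrow> 'a spstate \<Rightarrow> bool" where
  "sp_reachable V r c s \<longleftrightarrow> (spstep V r c)\<^sup>*\<^sup>* (None, []) s"

end

theory Submission
  imports Defs
begin

text \<open>Executing a node replaces it by children, which lie one level deeper, and a pushed child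
  sits at the same depth as the newly assigned one; popping only ever exposes shallower nodes.
  Hence the assigned node is at least as deep as every deque node and the deque gets strictly
  shallower from bottom to top. Negating depths turns this into the claimed chain of weights.\<close>

lemma child_in_nodes:
  assumes "rooted_tree V r c" "u \<in> V" "x \<in> set (c u)"
  shows "x \<in> V"
  using assms unfolding rooted_tree_def by blast

lemma depth_path:
  assumes "rooted_tree V r c" "v \<in> V"
  shows "(r, v) \<in> tree_edges V c ^^ depth V r c v"
proof -
  have "(r, v) \<in> (tree_edges V c)\<^sup>*" using assms unfolding rooted_tree_def by blast
  then obtain n where "(r, v) \<in> tree_edges V c ^^ n" using rtrancl_power by blast
  then show ?thesis unfolding depth_def by (rule LeastI)
qed

lemma depth_le_path_length:
  assumes "(r, v) \<in> tree_edges V c ^^ n"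
  shows "depth V r c v \<le> n"
  using assms unfolding depth_def by (rule Least_le)

lemma depth_child:
  assumes T: "rooted_tree V r c" and u: "u \<in> V" and x: "x \<in> set (c u)"
  shows "depth V r c x = depth V r c u + 1"
proof -
  let ?E = "tree_edges V c"
  have xV: "x \<in> V" using child_in_nodes[OF assms] .
  have x_not_root: "x \<noteq> r" using T u x unfolding rooted_tree_def by blast
  have unique_parent: "z = u" if "(z, x) \<in> ?E" for z
    using T xV x_not_root u x that unfolding rooted_tree_def tree_edges_def by blast
  have "(r, x) \<in> ?E ^^ (depth V r c u + 1)"
    using depth_path[OF T u] u x by (auto simp: tree_edges_def)
  then have upper: "depth V r c x \<le> depth V r c u + 1" by (rule depth_le_path_length)
  have path_x: "(r, x) \<in> ?E ^^ depth V r c x" using depth_path[OF T xV] .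
  with x_not_root obtain m where m: "depth V r c x = Suc m"
    by (cases "depth V r c x") auto
  with path_x obtain z where "(r, z) \<in> ?E ^^ m" "(z, x) \<in> ?E" by auto
  then have "(r, u) \<in> ?E ^^ m" using unique_parent by blast
  then have "depth V r c u \<le> m" by (rule depth_le_path_length)
  with m upper show ?thesis by simp
qed

definition depth_ordered :: "'a set \<Rightarrow> 'a \<Rightarrow> ('a \<Rightarrow> 'a list) \<Rightarrow> 'a spstate \<Rightarrow> bool" where
  "depth_ordered V r c s \<longleftrightarrow>
     (case s of (a, q) \<Rightarrow>
        set q \<subseteq> V \<and> sorted_wrt (\<lambda>x y. depth V r c y < depth V r c x) q \<and>
        (\<forall>v0. a = Some v0 \<longrightarrow> v0 \<in> V \<and> (\<forall>x\<in>set q. depth V r c x \<le> depth V r c v0)))"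

lemma spstep_preserves_depth_ordered:
  assumes T: "rooted_tree V r c"
    and step: "spstep V r c s t" and ordered: "depth_ordered V r c s"
  shows "depth_ordered V r c t"
  using step ordered
proof cases
  case (exec0_pop v0 x q)
  then show ?thesis using ordered by (auto simp: depth_ordered_def less_imp_le)
next
  case (exec1 v0 x q)
  then have "v0 \<in> V" using ordered by (simp add: depth_ordered_def)
  with exec1 ordered show ?thesis
    using child_in_nodes[OF T] depth_child[OF T] by (fastforce simp: depth_ordered_def)
next
  case (exec2 v0 x y q)
  then have v0: "v0 \<in> V" using ordered by (simp add: depth_ordered_def)
  have "depth V r c x = depth V r c v0 + 1" "depth V r c y = depth V r c v0 + 1"
    using depth_child[OF T v0] exec2 by simp_all
  with exec2 ordered v0 show ?thesis
    using child_in_nodes[OF T v0] by (fastforce simp: depth_ordered_def)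
next
  case (remove_top q a)
  have "sorted_wrt (\<lambda>x y. depth V r c y < depth V r c x) (butlast q @ [last q])"
    using ordered remove_top by (simp add: depth_ordered_def)
  then have "sorted_wrt (\<lambda>x y. depth V r c y < depth V r c x) (butlast q)"
    by (simp add: sorted_wrt_append)
  with remove_top ordered show ?thesis
    by (auto simp: depth_ordered_def dest: in_set_butlastD)
qed (auto simp: depth_ordered_def)

lemma sp_reachable_depth_ordered:
  assumes "rooted_tree V r c" "sp_reachable V r c s"
  shows "depth_ordered V r c s"
  using assms(2) unfolding sp_reachable_def
proof (induction rule: rtranclp_induct)
  case base
  then show ?case by (simp add: depth_ordered_def)
next
  case (step s t)
  then show ?case using spstep_preserves_depth_ordered[OF assms(1)] by blast
qed

theorem mainTheorem5:
  fixes V :: "'a set" and r :: 'a and c :: "'a \<Rightarrow> 'a list" and T_inf :: int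
  assumes "rooted_tree V r c"
    and "T_inf \<ge> int (tree_depth V r c)"
    and "sp_reachable V r c (a, q)"
  defines "w \<equiv> \<lambda>v. T_inf - int (depth V r c v)"
  shows "(\<forall>v0. a = Some v0 \<longrightarrow> q \<noteq> [] \<longrightarrow> w v0 \<le> w (hd q))
         \<and> sorted_wrt (\<lambda>x y. w x < w y) q"
proof -
  have ordered: "depth_ordered V r c (a, q)"
    using sp_reachable_depth_ordered[OF assms(1,3)] .
  then have "sorted_wrt (\<lambda>x y. w x < w y) q"
    by (auto simp: depth_ordered_def w_def elim: sorted_wrt_mono_rel[rotated])
  moreover have "w v0 \<le> w (hd q)" if "a = Some v0" "q \<noteq> []" for v0
    using ordered that by (auto simp: depth_ordered_def w_def)
  ultimately show ?thesis by blast
qed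

end
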